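(* Let $L_{n,j}$, $D_{n,j}$, $U_{n,j}$ denote the total number of levels, descents, and ascents, respectively, over all members of $I_{n,j}$. Then $$\sum_{n\ge1}\sum_{j=1}^nL_{n,j}y^j\frac{x^n}{n!}=xy+\frac{2(xy-y-1)\ln(1-xy)-2y(x-2)\ln(1-x)-y\left(\ln^2(1-xy)-\ln^2(1-x)\right)}{2(1-y)},$$ $$\sum_{n\ge1}\sum_{j=1}^nD_{n,j}y^j\frac{x^n}{n!}=\frac{xy}{2(1-y)}\left(\frac{3x-2}{1-x}-\frac{xy^2}{1-xy}\right)+\frac{(1-xy)\ln(1-xy)-y(2-x-y)\ln(1-x)}{(1-y)^2}+\frac{y\left(\ln^2(1-xy)-\ln^2(1-x)\right)}{2(1-y)},$$ $$\sum_{n\ge1}\sum_{j=1}^nU_{n,j}y^j\frac{x^n}{n!}=\frac{xy}{2(1-y)}\left(\frac{2-x}{1-x}-\frac{xy^2}{1-xy}\right)+\frac{y(1-xy)}{(1-y)^2}\ln\left(\frac{1-x}{1-xy}\right).$$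
   Context: An inversion sequence of length $n$ is a sequence $\rho=\rho_1\cdots\rho_n$ of integers with $1\le \rho_i\le i$ for all $i$; $I_{n,j}$ is the set of those of length $n$ with last letter $j$. A level, descent, or ascent of $\rho$ is an index $i\in[n-1]$ with $\rho_i=\rho_{i+1}$, $\rho_i>\rho_{i+1}$, or $\rho_i<\rho_{i+1}$, respectively. *)

theory Defs
  imports Complex_Main
begin

text \<open>Inversion sequences of length n are lists rho of length n with
  1 \<le> rho!k \<le> k+1 for 0-based positions k (i.e. 1 \<le> rho_i \<le> i, 1-based).\<close>

definition inv_seq :: "nat \<Rightarrow> nat list set" where
  "inv_seq n = {rho. length rho = n \<and> (\<forall>k<n. 1 \<le> rho ! k \<and> rho ! k \<le> k + 1)}"

definition I_set :: "nat \<Rightarrow> nat \<Rightarrow> nat list set" where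
  "I_set n j = {rho \<in> inv_seq n. n \<ge> 1 \<and> last rho = j}"

text \<open>Levels, descents, ascents: 1-based indices i in [n-1] correspond to
  0-based indices i < n - 1 comparing rho!i with rho!(i+1).\<close>
definition levels :: "nat list \<Rightarrow> nat" where
  "levels rho = card {i. i + 1 < length rho \<and> rho ! i = rho ! (i + 1)}"

definition descents :: "nat list \<Rightarrow> nat" where
  "descents rho = card {i. i + 1 < length rho \<and> rho ! i > rho ! (i + 1)}"

definition ascents :: "nat list \<Rightarrow> nat" where
  "ascents rho = card {i. i + 1 < length rho \<and> rho ! i < rho ! (i + 1)}"

definition L_tot :: "nat \<Rightarrow> nat \<Rightarrow> nat" where
  "L_tot n j = (\<Sum>rho\<in>I_set n j. levels rho)"

definition D_tot :: "nat \<Rightarrow> nat \<Rightarrow> nat" where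
  "D_tot n j = (\<Sum>rho\<in>I_set n j. descents rho)"

definition U_tot :: "nat \<Rightarrow> nat \<Rightarrow> nat" where
  "U_tot n j = (\<Sum>rho\<in>I_set n j. ascents rho)"

end

theory Submission
  imports Defs "HOL-Analysis.Harmonic_Numbers"
begin

text \<open>
  Deleting the last letter j of a sequence in I_{n+1,j} is a bijection onto all inversion
  sequences of length n, and it destroys exactly one adjacent pair, namely (k, j) with k the
  new last letter. Hence, for each of the relations =, >, <, the total over I_{n+1,j} is the
  total A_n over all sequences of length n plus (n-1)! times the number of k \<le> n related
  to j, and the same decomposition gives a recursion for A_n. Solving it, the mean numbers of
  levels, descents and ascents are H_n - 1, (n+1)/2 - H_n and (n-1)/2, so each generating
  function is a combination of the series of z^2/(1-z), ln(1-z), z ln(1-z) and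
  ln(1-z)^2/2 = \<Sum> H_n z^(n+1)/(n+1), taken at z = x and z = xy.
\<close>

definition adj_count :: "(nat \<Rightarrow> nat \<Rightarrow> bool) \<Rightarrow> nat list \<Rightarrow> nat" where
  "adj_count R r = card {i. i + 1 < length r \<and> R (r ! i) (r ! (i + 1))}"

lemma adj_count_snoc:
  assumes "r \<noteq> []"
  shows "adj_count R (r @ [j]) = adj_count R r + (if R (last r) j then 1 else 0)"
proof -
  let ?S = "{i. i + 1 < length r \<and> R (r ! i) (r ! (i + 1))}"
  let ?E = "{i. i + 1 = length r \<and> R (last r) j}"
  have "i \<in> {i. i + 1 < length (r @ [j]) \<and> R ((r @ [j]) ! i) ((r @ [j]) ! (i + 1))}
      \<longleftrightarrow> i \<in> ?S \<union> ?E" for i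
  proof (cases "i + 1 < length r")
    case False
    then have "i < length r \<longleftrightarrow> i = length r - 1" using assms by auto
    with False assms show ?thesis by (auto simp: nth_append last_conv_nth)
  qed (auto simp: nth_append)
  then have "adj_count R (r @ [j]) = card (?S \<union> ?E)"
    unfolding adj_count_def by (metis (no_types, lifting) set_eqI)
  also have "\<dots> = card ?S + card ?E"
    by (rule card_Un_disjoint) (auto intro: finite_subset[of _ "{..<length r}"])
  also have "?E = (if R (last r) j then {length r - 1} else {})"
    using assms by auto
  finally show ?thesis by (simp add: adj_count_def)
qed

lemma inv_seq_0: "inv_seq 0 = {[]}"
  by (auto simp: inv_seq_def)

lemma inv_seq_Suc: "inv_seq (Suc n) = (\<lambda>(r, j). r @ [j]) ` (inv_seq n \<times> {1..Suc n})"
  (is "?A = ?B")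
proof
  show "?A \<subseteq> ?B"
  proof
    fix s assume s: "s \<in> ?A"
    then obtain r j where sr: "s = r @ [j]" and len: "length r = n"
      by (auto simp: inv_seq_def length_Suc_conv_rev)
    have bounds: "1 \<le> s ! k \<and> s ! k \<le> k + 1" if "k < Suc n" for k
      using s that by (simp add: inv_seq_def)
    have "r ! k = s ! k" if "k < n" for k
      using that len by (simp add: sr nth_append)
    then have "r \<in> inv_seq n"
      using bounds len by (simp add: inv_seq_def)
    moreover have "j \<in> {1..Suc n}"
      using bounds[of n] len by (simp add: sr nth_append)
    ultimately show "s \<in> ?B" using sr by auto
  qed
  show "?B \<subseteq> ?A" by (auto simp: inv_seq_def nth_append less_Suc_eq)
qed

lemma inj_on_snoc: "inj_on (\<lambda>(r, j). r @ [j]) A"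
  by (auto simp: inj_on_def)

lemma finite_inv_seq [simp]: "finite (inv_seq n)"
  by (induction n) (auto simp: inv_seq_0 inv_seq_Suc)

lemma card_inv_seq: "card (inv_seq n) = fact n"
proof (induction n)
  case (Suc n)
  have "card (inv_seq (Suc n)) = card (inv_seq n \<times> {1..Suc n})"
    unfolding inv_seq_Suc by (rule card_image[OF inj_on_snoc])
  then show ?case by (simp add: card_cartesian_product Suc)
qed (simp add: inv_seq_0)

lemma card_inv_seq_last:
  "card {r \<in> inv_seq (Suc m). P (last r)} = fact m * card {k \<in> {1..Suc m}. P k}"
proof -
  have "{r \<in> inv_seq (Suc m). P (last r)} = (\<lambda>(r, k). r @ [k]) ` (inv_seq m \<times> {k \<in> {1..Suc m}. P k})"
    unfolding inv_seq_Suc by auto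
  then show ?thesis
    by (simp add: card_image[OF inj_on_snoc] card_cartesian_product card_inv_seq)
qed

lemma sum_inv_seq_Suc:
  "(\<Sum>r\<in>inv_seq (Suc n). f r) = (\<Sum>j=1..Suc n. \<Sum>r\<in>inv_seq n. f (r @ [j]))"
proof -
  have "(\<Sum>r\<in>inv_seq (Suc n). f r) = (\<Sum>(r, j)\<in>inv_seq n \<times> {1..Suc n}. f (r @ [j]))"
    unfolding inv_seq_Suc sum.reindex[OF inj_on_snoc] by (simp add: comp_def case_prod_unfold)
  also have "\<dots> = (\<Sum>r\<in>inv_seq n. \<Sum>j=1..Suc n. f (r @ [j]))"
    by (rule sum.cartesian_product[symmetric])
  finally show ?thesis by (rule trans[OF _ sum.swap])
qed

lemma sum_I_set_Suc:
  assumes "j \<in> {1..Suc n}"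
  shows "(\<Sum>r\<in>I_set (Suc n) j. f r) = (\<Sum>r\<in>inv_seq n. f (r @ [j]))"
proof -
  have "I_set (Suc n) j = (\<lambda>r. r @ [j]) ` inv_seq n"
    using assms unfolding I_set_def inv_seq_Suc by auto
  moreover have "inj_on (\<lambda>r. r @ [j]) (inv_seq n)" by (auto simp: inj_on_def)
  ultimately show ?thesis by (simp add: sum.reindex)
qed

definition adj_mean :: "(nat \<Rightarrow> nat \<Rightarrow> bool) \<Rightarrow> nat \<Rightarrow> real" where
  "adj_mean R n = (\<Sum>r\<in>inv_seq n. real (adj_count R r)) / fact n"

text \<open>Appending j to a sequence with last letter k creates a new adjacent pair in R iff R k j.\<close>

definition successor_poly :: "(nat \<Rightarrow> nat \<Rightarrow> bool) \<Rightarrow> nat \<Rightarrow> real \<Rightarrow> real" where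
  "successor_poly R n y = (\<Sum>j=1..Suc n. real (card {k \<in> {1..n}. R k j}) * y ^ j)"

definition adj_gf_term :: "(nat \<Rightarrow> nat \<Rightarrow> bool) \<Rightarrow> real \<Rightarrow> real \<Rightarrow> nat \<Rightarrow> real" where
  "adj_gf_term R x y n =
     (\<Sum>j=1..Suc n. real (\<Sum>r\<in>I_set (Suc n) j. adj_count R r) * y ^ j) * x ^ Suc n / fact (Suc n)"

lemma sum_adj_count_snoc:
  "(\<Sum>r\<in>inv_seq (Suc m). real (adj_count R (r @ [j])))
     = fact (Suc m) * adj_mean R (Suc m) + fact m * card {k \<in> {1..Suc m}. R k j}"
proof -
  have "(\<Sum>r\<in>inv_seq (Suc m). real (adj_count R (r @ [j])))
      = (\<Sum>r\<in>inv_seq (Suc m). real (adj_count R r) + (if R (last r) j then 1 else 0))"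
  proof (rule sum.cong)
    fix r assume "r \<in> inv_seq (Suc m)"
    then have "r \<noteq> []" by (auto simp: inv_seq_def)
    then show "real (adj_count R (r @ [j])) = real (adj_count R r) + (if R (last r) j then 1 else 0)"
      by (simp add: adj_count_snoc)
  qed simp
  also have "\<dots> = (\<Sum>r\<in>inv_seq (Suc m). real (adj_count R r))
      + (\<Sum>r\<in>inv_seq (Suc m). if R (last r) j then 1 else 0)"
    by (rule sum.distrib)
  also have "(\<Sum>r\<in>inv_seq (Suc m). if R (last r) j then 1 else 0)
      = real (card {r \<in> inv_seq (Suc m). R (last r) j})"
    by (simp add: sum.inter_filter[symmetric])
  finally show ?thesis
    unfolding card_inv_seq_last[where P = "\<lambda>k. R k j"] adj_mean_def by simp
qed

lemma adj_mean_1: "adj_mean R 1 = 0"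
proof -
  have "inv_seq 1 = {[1]}"
    by (simp add: inv_seq_Suc inv_seq_0)
  then show ?thesis by (simp add: adj_mean_def adj_count_def)
qed

lemma adj_mean_Suc_Suc:
  "adj_mean R (Suc (Suc m))
    = adj_mean R (Suc m) + successor_poly R (Suc m) 1 / (real (m + 1) * real (m + 2))"
proof -
  define a b where "a = real (m + 1)" and "b = real (m + 2)"
  have "b * a * fact m * adj_mean R (Suc (Suc m)) = (\<Sum>r\<in>inv_seq (Suc (Suc m)). real (adj_count R r))"
    by (simp add: adj_mean_def a_def b_def)
  also have "\<dots> = (\<Sum>j=1..Suc (Suc m).
      a * fact m * adj_mean R (Suc m) + fact m * card {k \<in> {1..Suc m}. R k j})"
    by (simp only: sum_inv_seq_Suc[of _ "Suc m"] sum_adj_count_snoc fact_Suc of_nat_mult) (simp add: a_def)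
  also have "\<dots> = b * a * fact m * adj_mean R (Suc m) + fact m * successor_poly R (Suc m) 1"
    by (simp add: sum.distrib sum_distrib_left successor_poly_def b_def algebra_simps del: sum.cl_ivl_Suc)
  finally have "fact m * (b * a * adj_mean R (Suc (Suc m)))
      = fact m * (b * a * adj_mean R (Suc m) + successor_poly R (Suc m) 1)"
    by (simp add: algebra_simps)
  then have "b * a * adj_mean R (Suc (Suc m)) = b * a * adj_mean R (Suc m) + successor_poly R (Suc m) 1"
    by (simp only: mult_cancel_left fact_nonzero simp_thms)
  moreover have "a \<noteq> 0" "b \<noteq> 0"
    by (simp_all add: a_def b_def)
  ultimately show ?thesis
    unfolding a_def [symmetric] b_def [symmetric] by (simp add: field_simps)
qed

lemma adj_gf_term_0: "adj_gf_term R x y 0 = 0"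
  by (simp add: adj_gf_term_def sum_I_set_Suc inv_seq_0 adj_count_def)

lemma adj_gf_term_Suc:
  "adj_gf_term R x y (Suc m) = x ^ (m + 2) / real (m + 2) *
     (adj_mean R (Suc m) * (\<Sum>j=1..m+2. y ^ j) + successor_poly R (Suc m) y / real (m + 1))"
proof -
  let ?a = "real (m + 1)" and ?b = "real (m + 2)"
  have "(\<Sum>j=1..Suc (Suc m). real (\<Sum>r\<in>I_set (Suc (Suc m)) j. adj_count R r) * y ^ j)
      = (\<Sum>j=1..Suc (Suc m).
          (?a * fact m * adj_mean R (Suc m) + fact m * card {k \<in> {1..Suc m}. R k j}) * y ^ j)"
    by (intro sum.cong refl) (simp add: sum_I_set_Suc sum_adj_count_snoc of_nat_sum)
  also have "\<dots> = ?a * fact m * adj_mean R (Suc m) * (\<Sum>j=1..m+2. y ^ j) + fact m * successor_poly R (Suc m) y"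
    by (simp add: algebra_simps sum.distrib sum_distrib_left successor_poly_def del: sum.cl_ivl_Suc)
  moreover have "fact (Suc (Suc m)) = ?b * (?a * fact m)"
    by simp
  moreover have "(a * F * M * G + F * P) * X / (b * (a * F)) = X / b * (M * G + P / a)"
    if "a \<noteq> 0" "b \<noteq> 0" "F \<noteq> 0" for a b F M G P X :: real
    using that by (simp add: field_simps)
  ultimately show ?thesis
    unfolding adj_gf_term_def by (simp del: sum.cl_ivl_Suc fact_Suc of_nat_add)
qed

lemma adj_gf_term_sums_iff: "adj_gf_term R x y sums s \<longleftrightarrow>
    (\<lambda>m. adj_gf_term R x y (Suc m)) sums s"
  by (simp add: sums_Suc_iff adj_gf_term_0)

lemma power_Suc_div_Suc_sums:
  fixes z :: real
  assumes "\<bar>z\<bar> < 1"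
  shows "(\<lambda>n. z ^ Suc n / real (Suc n)) sums (- ln (1 - z))"
proof -
  have "(\<lambda>n. - ((- (- z)) ^ n) / real n) sums ln (1 + - z)"
    using assms by (intro ln_series') simp
  then have "(\<lambda>n. z ^ n / real n) sums (- ln (1 - z))"
    using sums_minus by fastforce
  then show ?thesis
    using sums_Suc_iff[of "\<lambda>n. z ^ n / real n"] by simp
qed

lemma harm_convolution:
  "(\<Sum>i\<le>k. 1 / (real (i + 1) * real (k - i + 1))) = 2 * harm (k + 1) / real (k + 2)"
proof -
  have "(\<Sum>i\<le>k. 1 / (real (i + 1) * real (k - i + 1)))
      = (\<Sum>i\<le>k. 1 / real (i + 1) + 1 / real (k - i + 1)) / real (k + 2)"
    unfolding sum_divide_distrib
  proof (intro sum.cong refl)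
    fix i assume "i \<in> {..k}"
    define a b where "a = real (i + 1)" and "b = real (k - i + 1)"
    have "a + b = real (k + 2)" "a > 0" "b > 0"
      using \<open>i \<in> {..k}\<close> by (simp_all add: a_def b_def)
    moreover have "1 / a + 1 / b = (a + b) / (a * b)"
      using \<open>a > 0\<close> \<open>b > 0\<close> by (simp add: field_simps)
    ultimately show "1 / (real (i + 1) * real (k - i + 1))
        = (1 / real (i + 1) + 1 / real (k - i + 1)) / real (k + 2)"
      unfolding a_def [symmetric] b_def [symmetric] by simp
  qed
  also have "(\<Sum>i\<le>k. 1 / real (k - i + 1)) = (\<Sum>i\<le>k. 1 / real (i + 1))"
    using sum.atLeastAtMost_rev[of "\<lambda>i. 1 / real (i + 1)" 0 k] by (simp add: atMost_atLeast0)
  ultimately show ?thesis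
    by (simp add: sum.distrib harm_altdef lessThan_Suc_atMost divide_inverse)
qed

lemma power_add_2_sums:
  fixes z :: real
  assumes "\<bar>z\<bar> < 1"
  shows "(\<lambda>m. z ^ (m + 2)) sums (z\<^sup>2 / (1 - z))"
proof -
  have "(\<lambda>m. z\<^sup>2 * z ^ m) sums (z\<^sup>2 * (1 / (1 - z)))"
    using assms by (intro sums_mult geometric_sums) simp
  moreover have "(\<lambda>m. z ^ (m + 2)) = (\<lambda>m. z\<^sup>2 * z ^ m)"
    by (simp only: power_add mult.commute)
  ultimately show ?thesis
    by simp
qed

text \<open>
  Index m stands for sequences of length m + 2: the length-1 term of every generating
  function vanishes (see adj_gf_term_0), so these series start one term later.
\<close>

definition log_coeff :: "real \<Rightarrow> nat \<Rightarrow> real" where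
  "log_coeff z m = z ^ (m + 2) / real (m + 2)"

definition xlog_coeff :: "real \<Rightarrow> nat \<Rightarrow> real" where
  "xlog_coeff z m = z ^ (m + 2) / real (m + 1)"

definition log_sq_coeff :: "real \<Rightarrow> nat \<Rightarrow> real" where
  "log_sq_coeff z m = harm (m + 1) * z ^ (m + 2) / real (m + 2)"

lemma log_coeff_sums:
  assumes "\<bar>z\<bar> < 1"
  shows "log_coeff z sums (- ln (1 - z) - z)"
  using sums_Suc_iff[of "\<lambda>n. z ^ Suc n / real (Suc n)"] power_Suc_div_Suc_sums[OF assms]
  unfolding log_coeff_def add_2_eq_Suc' by simp

lemma xlog_coeff_sums:
  assumes "\<bar>z\<bar> < 1"
  shows "xlog_coeff z sums (- z * ln (1 - z))"
  using sums_mult[OF power_Suc_div_Suc_sums[OF assms], of z]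
  unfolding xlog_coeff_def add_2_eq_Suc' by (simp add: mult.commute)

lemma log_sq_coeff_sums:
  fixes z :: real
  assumes "\<bar>z\<bar> < 1"
  shows "log_sq_coeff z sums ((ln (1 - z))\<^sup>2 / 2)"
proof -
  define a where "a n = z ^ Suc n / real (Suc n)" for n
  have "a sums (- ln (1 - z))"
    unfolding a_def using assms by (rule power_Suc_div_Suc_sums)
  moreover have "(\<lambda>n. norm (a n)) sums (- ln (1 - \<bar>z\<bar>))"
    unfolding a_def using power_Suc_div_Suc_sums[of "\<bar>z\<bar>"] assms by (simp add: abs_mult power_abs)
  ultimately have "(\<lambda>k. \<Sum>i\<le>k. a i * a (k - i)) sums ((- ln (1 - z)) * (- ln (1 - z)))"
    using Cauchy_product_sums[of a a] by (simp add: sums_iff)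
  moreover have "(\<Sum>i\<le>k. a i * a (k - i)) = 2 * (harm (k + 1) * z ^ (k + 2) / real (k + 2))" for k
  proof -
    have "(\<Sum>i\<le>k. a i * a (k - i)) = z ^ (k + 2) * (\<Sum>i\<le>k. 1 / (real (i + 1) * real (k - i + 1)))"
      unfolding sum_distrib_left
      by (intro sum.cong refl) (simp add: a_def power_add[symmetric])
    also have "\<dots> = z ^ (k + 2) * (2 * harm (k + 1) / real (k + 2))"
      by (simp only: harm_convolution)
    finally show ?thesis
      by simp
  qed
  ultimately have "(\<lambda>k. 2 * (harm (k + 1) * z ^ (k + 2) / real (k + 2))) sums (ln (1 - z))\<^sup>2"
    by (simp only: power2_eq_square minus_mult_minus)
  from sums_mult[OF this, of "1 / 2"] show ?thesis
    unfolding log_sq_coeff_def by simp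
qed

lemma sum_power_from_1: "y \<noteq> 1 \<Longrightarrow> (\<Sum>j=1..n. y ^ j) = (y - y ^ Suc n) / (1 - y)"
  for y :: real
  using sum_gp[of y 1 n] by auto

lemma successor_poly_levels: "successor_poly (=) n y = (\<Sum>j=1..n. y ^ j)"
proof -
  have "{k \<in> {1..n}. k = j} = (if j \<in> {1..n} then {j} else {})" for j
    by auto
  then have "successor_poly (=) n y = (\<Sum>j=1..Suc n. if j \<le> n then y ^ j else 0)"
    unfolding successor_poly_def by (intro sum.cong refl) auto
  also have "\<dots> = (\<Sum>j=1..n. y ^ j)"
    by (simp add: sum.cl_ivl_Suc)
  finally show ?thesis .
qed

lemma adj_mean_levels: "adj_mean (=) (Suc m) = harm (Suc m) - 1"
proof (induction m)
  case 0
  then show ?case using adj_mean_1 by (simp add: harm_def)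
next
  case (Suc m)
  have "successor_poly (=) (Suc m) 1 = real (m + 1)"
    by (simp add: successor_poly_levels)
  then have "adj_mean (=) (Suc (Suc m)) = harm (Suc m) - 1 + 1 / real (m + 2)"
    unfolding adj_mean_Suc_Suc Suc.IH by (simp del: of_nat_add)
  then show ?case
    by (simp add: harm_Suc[of "Suc m"] inverse_eq_divide)
qed

lemma adj_gf_term_levels:
  assumes "y \<noteq> 1"
  shows "adj_gf_term (=) x y (Suc m)
    = y / (1 - y) * ((log_sq_coeff x m - log_coeff x m) - (log_sq_coeff (x * y) m - log_coeff (x * y) m))
      + 1 / (1 - y) * (y * (xlog_coeff x m - log_coeff x m) - (xlog_coeff (x * y) m - log_coeff (x * y) m))"
proof -
  define a b X Y H where "a = real (m + 1)" and "b = real (m + 2)"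
    and "X = x ^ (m + 2)" and "Y = y ^ (m + 2)" and "H = harm (m + 1)"
  have nz: "a \<noteq> 0" "b \<noteq> 0" "1 - y \<noteq> 0" and b: "b = a + 1"
    using assms by (simp_all add: a_def b_def)
  \<comment> \<open>Named atoms keep divide_simps from expanding casts and powers into polynomials in m.\<close>
  have atoms: "real (m + 1) = a" "real (m + 2) = b" "harm (Suc m) = H" "harm (m + 1) = H"
    "x ^ (m + 2) = X" "(x * y) ^ (m + 2) = X * Y" "y ^ Suc (m + 2) = y * Y" "y ^ Suc (Suc m) = Y"
    by (simp_all add: a_def b_def X_def Y_def H_def power_mult_distrib)
  show ?thesis
    unfolding adj_gf_term_Suc adj_mean_levels successor_poly_levels sum_power_from_1[OF assms]
      log_coeff_def xlog_coeff_def log_sq_coeff_def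
    by (simp only: atoms) (simp add: nz divide_simps, simp add: b algebra_simps)
qed

lemma adj_gf_levels_sums:
  fixes x y :: real
  assumes x: "\<bar>x\<bar> < 1" and y: "\<bar>y\<bar> < 1"
  shows "adj_gf_term (=) x y sums
    (x * y + (2 * (x * y - y - 1) * ln (1 - x * y) - 2 * y * (x - 2) * ln (1 - x)
       - y * ((ln (1 - x * y))\<^sup>2 - (ln (1 - x))\<^sup>2)) / (2 * (1 - y)))"
proof -
  have xy: "\<bar>x * y\<bar> < 1" and y1: "y \<noteq> 1"
    using abs_mult_less[OF x y] y by (auto simp: abs_mult)
  define A B where "A = ln (1 - x)" and "B = ln (1 - x * y)"
  have "(\<lambda>m. adj_gf_term (=) x y (Suc m)) sums
      (y / (1 - y) * ((A\<^sup>2 / 2 - (- A - x)) - (B\<^sup>2 / 2 - (- B - x * y)))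
       + 1 / (1 - y) * (y * (- x * A - (- A - x)) - (- (x * y) * B - (- B - x * y))))"
    unfolding adj_gf_term_levels[OF y1] A_def B_def
    by (intro sums_add sums_diff sums_mult log_coeff_sums xlog_coeff_sums log_sq_coeff_sums x xy)
  also have "y / (1 - y) * ((A\<^sup>2 / 2 - (- A - x)) - (B\<^sup>2 / 2 - (- B - x * y)))
       + 1 / (1 - y) * (y * (- x * A - (- A - x)) - (- (x * y) * B - (- B - x * y)))
    = x * y + (2 * (x * y - y - 1) * B - 2 * y * (x - 2) * A - y * (B\<^sup>2 - A\<^sup>2)) / (2 * (1 - y))"
    using y1 by (simp add: divide_simps, simp add: algebra_simps power2_eq_square)
  finally show ?thesis
    unfolding adj_gf_term_sums_iff A_def B_def .
qed

lemma successor_poly_descents: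
  "successor_poly (\<lambda>a b. b < a) n y = (\<Sum>j=1..Suc n. real (n - j) * y ^ j)"
proof -
  have "{k \<in> {1..n}. j < k} = {Suc j..n}" for j
    by auto
  then show ?thesis
    unfolding successor_poly_def by simp
qed

lemma successor_poly_descents_Suc:
  "successor_poly (\<lambda>a b. b < a) (Suc n) y = real n * y + y * successor_poly (\<lambda>a b. b < a) n y"
proof -
  have "(\<Sum>j=1..Suc (Suc n). real (Suc n - j) * y ^ j)
      = real n * y + (\<Sum>j=Suc 1..Suc (Suc n). real (Suc n - j) * y ^ j)"
    by (subst sum.atLeast_Suc_atMost) simp_all
  also have "(\<Sum>j=Suc 1..Suc (Suc n). real (Suc n - j) * y ^ j) = y * (\<Sum>j=1..Suc n. real (n - j) * y ^ j)"
    by (simp only: sum.shift_bounds_cl_Suc_ivl sum_distrib_left) (simp add: algebra_simps)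
  finally show ?thesis
    unfolding successor_poly_descents .
qed

lemma successor_poly_descents_1: "successor_poly (\<lambda>a b. b < a) n 1 = real n * (real n - 1) / 2"
  by (induction n) (simp add: successor_poly_descents, simp add: successor_poly_descents_Suc field_simps)

lemma successor_poly_descents_closed:
  "(1 - y)\<^sup>2 * successor_poly (\<lambda>a b. b < a) n y = (real n - 1) * y - real n * y\<^sup>2 + y ^ Suc n"
proof (induction n)
  case (Suc n)
  have "(1 - y)\<^sup>2 * successor_poly (\<lambda>a b. b < a) (Suc n) y
      = (1 - y)\<^sup>2 * real n * y + y * ((1 - y)\<^sup>2 * successor_poly (\<lambda>a b. b < a) n y)"
    by (simp add: successor_poly_descents_Suc algebra_simps)
  also have "\<dots> = (real (Suc n) - 1) * y - real (Suc n) * y\<^sup>2 + y ^ Suc (Suc n)"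
    unfolding Suc.IH by (simp add: power2_eq_square algebra_simps)
  finally show ?case .
qed (simp add: successor_poly_descents)

lemma adj_mean_descents: "adj_mean (\<lambda>a b. b < a) (Suc m) = real (m + 2) / 2 - harm (Suc m)"
proof (induction m)
  case 0
  then show ?case using adj_mean_1 by (simp add: harm_def)
next
  case (Suc m)
  have "adj_mean (\<lambda>a b. b < a) (Suc (Suc m))
      = real (m + 2) / 2 - harm (Suc m) + real m / (2 * real (m + 2))"
    unfolding adj_mean_Suc_Suc Suc.IH successor_poly_descents_1 by (simp del: of_nat_add)
  then show ?case
    by (simp add: harm_Suc[of "Suc m"] field_simps)
qed

lemma adj_gf_term_descents:
  assumes "y \<noteq> 1"
  shows "adj_gf_term (\<lambda>a b. b < a) x y (Suc m)
    = y / (1 - y) * ((x ^ (m + 2) / 2 - log_sq_coeff x m) - ((x * y) ^ (m + 2) / 2 - log_sq_coeff (x * y) m))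
      + 1 / (1 - y)\<^sup>2 * (y * (2 * log_coeff x m - xlog_coeff x m) - y\<^sup>2 * log_coeff x m
        + (xlog_coeff (x * y) m - log_coeff (x * y) m))"
proof -
  define a b X Y H where "a = real (m + 1)" and "b = real (m + 2)"
    and "X = x ^ (m + 2)" and "Y = y ^ (m + 2)" and "H = harm (m + 1)"
  have nz: "a \<noteq> 0" "b \<noteq> 0" "1 - y \<noteq> 0" and b: "b = a + 1"
    using assms by (simp_all add: a_def b_def)
  have poly: "successor_poly (\<lambda>a b. b < a) (Suc m) y
      = ((real (Suc m) - 1) * y - real (Suc m) * y\<^sup>2 + y ^ Suc (Suc m)) / (1 - y)\<^sup>2"
    using successor_poly_descents_closed[of y "Suc m"] nz by (simp add: field_simps)
  have atoms: "real (m + 1) = a" "real (Suc m) = a" "real (m + 2) = b"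
    "harm (Suc m) = H" "harm (m + 1) = H"
    "x ^ (m + 2) = X" "(x * y) ^ (m + 2) = X * Y" "y ^ Suc (m + 2) = y * Y" "y ^ Suc (Suc m) = Y"
    by (simp_all add: a_def b_def X_def Y_def H_def power_mult_distrib)
  show ?thesis
    unfolding adj_gf_term_Suc adj_mean_descents poly sum_power_from_1[OF assms]
      log_coeff_def xlog_coeff_def log_sq_coeff_def
    by (simp only: atoms) (simp add: nz divide_simps, simp add: b algebra_simps power2_eq_square)
qed

lemma adj_gf_descents_sums:
  fixes x y :: real
  assumes x: "\<bar>x\<bar> < 1" and y: "\<bar>y\<bar> < 1"
  shows "adj_gf_term (\<lambda>a b. b < a) x y sums
    (x * y / (2 * (1 - y)) * ((3 * x - 2) / (1 - x) - x * y\<^sup>2 / (1 - x * y))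
     + ((1 - x * y) * ln (1 - x * y) - y * (2 - x - y) * ln (1 - x)) / (1 - y)\<^sup>2
     + y * ((ln (1 - x * y))\<^sup>2 - (ln (1 - x))\<^sup>2) / (2 * (1 - y)))"
proof -
  have xy: "\<bar>x * y\<bar> < 1"
    using abs_mult_less[OF x y] by (simp add: abs_mult)
  then have y1: "y \<noteq> 1" and x1: "x \<noteq> 1" and xy1: "x * y \<noteq> 1"
    using x y by auto
  define A B where "A = ln (1 - x)" and "B = ln (1 - x * y)"
  have "(\<lambda>m. adj_gf_term (\<lambda>a b. b < a) x y (Suc m)) sums
      (y / (1 - y) * ((x\<^sup>2 / (1 - x) / 2 - A\<^sup>2 / 2) - ((x * y)\<^sup>2 / (1 - x * y) / 2 - B\<^sup>2 / 2))
       + 1 / (1 - y)\<^sup>2 * (y * (2 * (- A - x) - - x * A) - y\<^sup>2 * (- A - x)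
         + (- (x * y) * B - (- B - x * y))))"
    unfolding adj_gf_term_descents[OF y1] A_def B_def
    by (intro sums_add sums_diff sums_mult sums_divide power_add_2_sums
        log_coeff_sums xlog_coeff_sums log_sq_coeff_sums x xy)
  also have "y / (1 - y) * ((x\<^sup>2 / (1 - x) / 2 - A\<^sup>2 / 2) - ((x * y)\<^sup>2 / (1 - x * y) / 2 - B\<^sup>2 / 2))
       + 1 / (1 - y)\<^sup>2 * (y * (2 * (- A - x) - - x * A) - y\<^sup>2 * (- A - x)
         + (- (x * y) * B - (- B - x * y)))
    = x * y / (2 * (1 - y)) * ((3 * x - 2) / (1 - x) - x * y\<^sup>2 / (1 - x * y))
      + ((1 - x * y) * B - y * (2 - x - y) * A) / (1 - y)\<^sup>2
      + y * (B\<^sup>2 - A\<^sup>2) / (2 * (1 - y))"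
    using y1 x1 xy1 by (simp add: divide_simps, simp add: algebra_simps power2_eq_square)
  finally show ?thesis
    unfolding adj_gf_term_sums_iff A_def B_def .
qed

lemma successor_poly_ascents: "successor_poly (<) n y = (\<Sum>j=1..Suc n. real (j - 1) * y ^ j)"
proof -
  have "{k \<in> {1..n}. k < j} = {1..j - 1}" if "j \<le> Suc n" for j
    using that by auto
  then show ?thesis
    unfolding successor_poly_def by (intro sum.cong refl) simp
qed

lemma successor_poly_ascents_Suc:
  "successor_poly (<) (Suc n) y = successor_poly (<) n y + real (Suc n) * y ^ Suc (Suc n)"
  by (simp add: successor_poly_ascents)

lemma successor_poly_ascents_1: "successor_poly (<) n 1 = real n * (real n + 1) / 2"
  by (induction n) (simp add: successor_poly_ascents, simp add: successor_poly_ascents_Suc field_simps)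

lemma successor_poly_ascents_closed:
  "(1 - y)\<^sup>2 * successor_poly (<) n y
    = y\<^sup>2 - real (Suc n) * y ^ Suc (Suc n) + real n * y ^ Suc (Suc (Suc n))"
proof (induction n)
  case (Suc n)
  have "(1 - y)\<^sup>2 * successor_poly (<) (Suc n) y
      = (1 - y)\<^sup>2 * successor_poly (<) n y + (1 - y)\<^sup>2 * real (Suc n) * y ^ Suc (Suc n)"
    by (simp add: successor_poly_ascents_Suc algebra_simps)
  also have "\<dots> = y\<^sup>2 - real (Suc (Suc n)) * y ^ Suc (Suc (Suc n))
      + real (Suc n) * y ^ Suc (Suc (Suc (Suc n)))"
    unfolding Suc.IH by (simp add: power2_eq_square algebra_simps)
  finally show ?case .
qed (simp add: successor_poly_ascents power2_eq_square)

lemma adj_mean_ascents: "adj_mean (<) (Suc m) = real m / 2"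
proof (induction m)
  case 0
  then show ?case using adj_mean_1 by simp
next
  case (Suc m)
  have "adj_mean (<) (Suc (Suc m)) = real m / 2 + 1 / 2"
    unfolding adj_mean_Suc_Suc Suc.IH successor_poly_ascents_1 by (simp del: of_nat_add)
  then show ?case
    by simp
qed

lemma adj_gf_term_ascents:
  assumes "y \<noteq> 1"
  shows "adj_gf_term (<) x y (Suc m)
    = y / (1 - y) * ((x ^ (m + 2) / 2 - log_coeff x m) - ((x * y) ^ (m + 2) / 2 - log_coeff (x * y) m))
      + y / (1 - y)\<^sup>2 * (y * (xlog_coeff x m - log_coeff x m) - xlog_coeff (x * y) m + y * log_coeff (x * y) m)"
proof -
  define a b X Y where "a = real (m + 1)" and "b = real (m + 2)"
    and "X = x ^ (m + 2)" and "Y = y ^ (m + 2)"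
  have nz: "a \<noteq> 0" "b \<noteq> 0" "1 - y \<noteq> 0" and b: "b = a + 1" and m: "real m = a - 1"
    using assms by (simp_all add: a_def b_def)
  have poly: "successor_poly (<) (Suc m) y
      = (y\<^sup>2 - real (Suc (Suc m)) * y ^ Suc (Suc (Suc m))
          + real (Suc m) * y ^ Suc (Suc (Suc (Suc m)))) / (1 - y)\<^sup>2"
    using successor_poly_ascents_closed[of y "Suc m"] nz by (simp add: field_simps)
  have atoms: "real (m + 1) = a" "real (Suc m) = a" "real (m + 2) = b" "real (Suc (Suc m)) = b"
    "x ^ (m + 2) = X" "(x * y) ^ (m + 2) = X * Y" "y ^ Suc (m + 2) = y * Y"
    "y ^ Suc (Suc (Suc m)) = y * Y" "y ^ Suc (Suc (Suc (Suc m))) = y * y * Y"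
    by (simp_all add: a_def b_def X_def Y_def power_mult_distrib)
  show ?thesis
    unfolding adj_gf_term_Suc adj_mean_ascents poly sum_power_from_1[OF assms]
      log_coeff_def xlog_coeff_def
    by (simp only: atoms) (simp add: nz divide_simps, simp add: b m algebra_simps power2_eq_square)
qed

lemma adj_gf_ascents_sums:
  fixes x y :: real
  assumes x: "\<bar>x\<bar> < 1" and y: "\<bar>y\<bar> < 1"
  shows "adj_gf_term (<) x y sums
    (x * y / (2 * (1 - y)) * ((2 - x) / (1 - x) - x * y\<^sup>2 / (1 - x * y))
     + y * (1 - x * y) / (1 - y)\<^sup>2 * ln ((1 - x) / (1 - x * y)))"
proof -
  have xy: "\<bar>x * y\<bar> < 1"
    using abs_mult_less[OF x y] by (simp add: abs_mult)
  then have y1: "y \<noteq> 1" and x1: "x \<noteq> 1" and xy1: "x * y \<noteq> 1"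
    using x y by auto
  define A B where "A = ln (1 - x)" and "B = ln (1 - x * y)"
  have "1 - x > 0" "1 - x * y > 0"
    using x xy by auto
  then have "ln ((1 - x) / (1 - x * y)) = A - B"
    by (simp add: A_def B_def ln_div)
  moreover have "(\<lambda>m. adj_gf_term (<) x y (Suc m)) sums
      (y / (1 - y) * ((x\<^sup>2 / (1 - x) / 2 - (- A - x)) - ((x * y)\<^sup>2 / (1 - x * y) / 2 - (- B - x * y)))
       + y / (1 - y)\<^sup>2 * (y * (- x * A - (- A - x)) - - (x * y) * B + y * (- B - x * y)))"
    unfolding adj_gf_term_ascents[OF y1] A_def B_def
    by (intro sums_add sums_diff sums_mult sums_divide power_add_2_sums
        log_coeff_sums xlog_coeff_sums x xy)
  moreover have "y / (1 - y) * ((x\<^sup>2 / (1 - x) / 2 - (- A - x)) - ((x * y)\<^sup>2 / (1 - x * y) / 2 - (- B - x * y)))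
       + y / (1 - y)\<^sup>2 * (y * (- x * A - (- A - x)) - - (x * y) * B + y * (- B - x * y))
    = x * y / (2 * (1 - y)) * ((2 - x) / (1 - x) - x * y\<^sup>2 / (1 - x * y))
      + y * (1 - x * y) / (1 - y)\<^sup>2 * (A - B)"
    using y1 x1 xy1 by (simp add: divide_simps, simp add: algebra_simps power2_eq_square)
  ultimately show ?thesis
    unfolding adj_gf_term_sums_iff by simp
qed

theorem theorem3p4:
  fixes x y :: real
  assumes "\<bar>x\<bar> < 1" and "\<bar>y\<bar> < 1"
  shows
   "((\<lambda>n. (\<Sum>j=1..Suc n. real (L_tot (Suc n) j) * y ^ j) * x ^ (Suc n) / fact (Suc n)) sums
      (x * y + (2 * (x * y - y - 1) * ln (1 - x * y) - 2 * y * (x - 2) * ln (1 - x)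
         - y * ((ln (1 - x * y))\<^sup>2 - (ln (1 - x))\<^sup>2)) / (2 * (1 - y)))) \<and>
   ((\<lambda>n. (\<Sum>j=1..Suc n. real (D_tot (Suc n) j) * y ^ j) * x ^ (Suc n) / fact (Suc n)) sums
      (x * y / (2 * (1 - y)) * ((3 * x - 2) / (1 - x) - x * y\<^sup>2 / (1 - x * y))
       + ((1 - x * y) * ln (1 - x * y) - y * (2 - x - y) * ln (1 - x)) / (1 - y)\<^sup>2
       + y * ((ln (1 - x * y))\<^sup>2 - (ln (1 - x))\<^sup>2) / (2 * (1 - y)))) \<and>
   ((\<lambda>n. (\<Sum>j=1..Suc n. real (U_tot (Suc n) j) * y ^ j) * x ^ (Suc n) / fact (Suc n)) sums
      (x * y / (2 * (1 - y)) * ((2 - x) / (1 - x) - x * y\<^sup>2 / (1 - x * y))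
       + y * (1 - x * y) / (1 - y)\<^sup>2 * ln ((1 - x) / (1 - x * y))))"
proof -
  have "levels = adj_count (=)" "descents = adj_count (\<lambda>a b. b < a)" "ascents = adj_count (<)"
    by (simp_all add: fun_eq_iff levels_def descents_def ascents_def adj_count_def)
  then show ?thesis
    using adj_gf_levels_sums[OF assms] adj_gf_descents_sums[OF assms] adj_gf_ascents_sums[OF assms]
    unfolding adj_gf_term_def L_tot_def D_tot_def U_tot_def by simp
qed

end
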